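(* Every weakly mixing dynamical system $(X,T)$ is transitively sensitive.
   Context: A dynamical system $(X,T)$: $X$ is a compact metric space (metric $d$) with more than one point and without isolated points, $T:X\to X$ a continuous surjection. "Opene" means open and nonempty. $(X,T)$ is transitive if $N_T(U,V)=\{n\in\mathbb{Z}_+:U\cap T^{-n}V\neq\varnothing\}\neq\varnothing$ for all opene $U,V$; weakly mixing if $(X\times X,T\times T)$ is transitive. With $S_T(U,\delta)=\{n\in\mathbb{Z}_+:\exists x_1,x_2\in U,\ d(T^nx_1,T^nx_2)>\delta\}$, $(X,T)$ is transitively sensitive if there is $\delta>0$ with $S_T(W,\delta)\cap N_T(U,V)\neq\varnothing$ for all opene $U,V,W\subset X$. *)

theory Defs
  imports "HOL-Analysis.Analysis"
begin

definition dyn_system :: "'a::metric_space set \<Rightarrow> ('a \<Rightarrow> 'a) \<Rightarrow> bool" where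
  "dyn_system X T \<longleftrightarrow> compact X \<and> (\<exists>x\<in>X. \<exists>y\<in>X. x \<noteq> y) \<and>
     (\<forall>x\<in>X. x islimpt X) \<and> continuous_on X T \<and> T ` X = X"

definition opene :: "'a::topological_space set \<Rightarrow> 'a set \<Rightarrow> bool" where
  "opene X U \<longleftrightarrow> openin (top_of_set X) U \<and> U \<noteq> {}"

definition hitting_times :: "'a set \<Rightarrow> ('a \<Rightarrow> 'a) \<Rightarrow> 'a set \<Rightarrow> 'a set \<Rightarrow> nat set" where
  "hitting_times X T U V = {n. U \<inter> {x\<in>X. (T ^^ n) x \<in> V} \<noteq> {}}"

definition transitive_sys :: "'a::topological_space set \<Rightarrow> ('a \<Rightarrow> 'a) \<Rightarrow> bool" where
  "transitive_sys X T \<longleftrightarrow> (\<forall>U V. opene X U \<and> opene X V \<longrightarrow> hitting_times X T U V \<noteq> {})"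

definition weakly_mixing :: "'a::topological_space set \<Rightarrow> ('a \<Rightarrow> 'a) \<Rightarrow> bool" where
  "weakly_mixing X T \<longleftrightarrow> transitive_sys (X \<times> X) (\<lambda>(x, y). (T x, T y))"

definition sensitive_times :: "('a \<Rightarrow> 'a) \<Rightarrow> 'a::metric_space set \<Rightarrow> real \<Rightarrow> nat set" where
  "sensitive_times T U \<delta> = {n. \<exists>x1\<in>U. \<exists>x2\<in>U. dist ((T ^^ n) x1) ((T ^^ n) x2) > \<delta>}"

definition transitively_sensitive :: "'a::metric_space set \<Rightarrow> ('a \<Rightarrow> 'a) \<Rightarrow> bool" where
  "transitively_sensitive X T \<longleftrightarrow> (\<exists>\<delta>>0. \<forall>U V W. opene X U \<and> opene X V \<and> opene X W \<longrightarrow>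
      sensitive_times T W \<delta> \<inter> hitting_times X T U V \<noteq> {})"

end

theory Submission
  imports Defs
begin

text \<open>Fix two distinct points a, b and put \<delta> = d(a,b)/4, A = B(a,\<delta>), B = B(b,\<delta>).
  Given opene U, V, W, weak mixing applied to W \<times> A and W \<times> B yields a time k such that
  W \<inter> T^-k(W) and A \<inter> T^-k(B) are nonempty; applied once more to these sets and to U, V it
  yields a time n \<in> N(U,V) and a point x \<in> W with T^k(x) \<in> W, T^n(x) \<in> A and
  T^n(T^k(x)) \<in> B. The two points x, T^k(x) of W are thus more than \<delta> apart at time n.\<close>

lemma funpow_image_subset:
  "T ` X \<subseteq> X \<Longrightarrow> (T ^^ k) ` X \<subseteq> X"
  by (induction k) auto

lemma continuous_on_funpow:
  assumes "continuous_on X T" "T ` X \<subseteq> X"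
  shows "continuous_on X (T ^^ k)"
proof (induction k)
  case 0
  then show ?case by (simp add: continuous_on_id)
next
  case (Suc k)
  have "continuous_on X (T \<circ> (T ^^ k))"
    using Suc continuous_on_subset[OF assms(1) funpow_image_subset[OF assms(2)]]
    by (rule continuous_on_compose)
  then show ?case by simp
qed

lemma funpow_prod_map:
  fixes T :: "'a \<Rightarrow> 'a"
  shows "((\<lambda>(x, y). (T x, T y)) ^^ n) (x, y) = ((T ^^ n) x, (T ^^ n) y)"
  by (induction n) auto

lemma openin_funpow_preimage:
  assumes "continuous_on X T" "T ` X \<subseteq> X" "openin (top_of_set X) V"
  shows "openin (top_of_set X) {x\<in>X. (T ^^ k) x \<in> V}"
proof -
  have "openin (top_of_set X) (X \<inter> (T ^^ k) -` V)"
    using continuous_on_funpow[OF assms(1,2)] assms(3)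
    by (intro continuous_openin_preimage) (use funpow_image_subset[OF assms(2)] in auto)
  then show ?thesis
    by (simp add: Int_def vimage_def)
qed

lemma opene_Times:
  "opene X A \<Longrightarrow> opene Y B \<Longrightarrow> opene (X \<times> Y) (A \<times> B)"
  unfolding opene_def by (simp add: openin_Times)

lemma opene_hitting_set:
  assumes "continuous_on X T" "T ` X \<subseteq> X" "opene X U" "opene X V"
    and "n \<in> hitting_times X T U V"
  shows "opene X (U \<inter> {x\<in>X. (T ^^ n) x \<in> V})"
  using assms openin_funpow_preimage[OF assms(1,2)]
  unfolding opene_def hitting_times_def by blast

lemma weakly_mixing_common_hitting_time:
  assumes "weakly_mixing X T" "opene X A" "opene X B" "opene X C" "opene X D"
  obtains n where "n \<in> hitting_times X T A C" "n \<in> hitting_times X T B D"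
proof -
  have "hitting_times (X \<times> X) (\<lambda>(x, y). (T x, T y)) (A \<times> B) (C \<times> D) \<noteq> {}"
    using assms unfolding weakly_mixing_def transitive_sys_def by (simp add: opene_Times)
  then obtain n where "n \<in> hitting_times (X \<times> X) (\<lambda>(x, y). (T x, T y)) (A \<times> B) (C \<times> D)"
    by blast
  then obtain x y where "x \<in> A \<inter> X" "(T ^^ n) x \<in> C" "y \<in> B \<inter> X" "(T ^^ n) y \<in> D"
    unfolding hitting_times_def by (fastforce simp: funpow_prod_map)
  then have "n \<in> hitting_times X T A C" "n \<in> hitting_times X T B D"
    unfolding hitting_times_def by auto
  then show ?thesis
    using that by blast
qed

lemma weakly_mixing_splitting_time:
  assumes "continuous_on X T" "T ` X \<subseteq> X" "weakly_mixing X T"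
    and "opene X A" "opene X B" "opene X U" "opene X V" "opene X W"
  obtains n x y where "n \<in> hitting_times X T U V"
    "x \<in> W" "y \<in> W" "(T ^^ n) x \<in> A" "(T ^^ n) y \<in> B"
proof -
  obtain k where kW: "k \<in> hitting_times X T W W" and kA: "k \<in> hitting_times X T A B"
    using weakly_mixing_common_hitting_time[OF assms(3,8,4,8,5)] .
  define W' where "W' = W \<inter> {x\<in>X. (T ^^ k) x \<in> W}"
  define A' where "A' = A \<inter> {x\<in>X. (T ^^ k) x \<in> B}"
  have "opene X W'" "opene X A'"
    unfolding W'_def A'_def using opene_hitting_set assms kW kA by blast+
  then obtain n where nW: "n \<in> hitting_times X T W' A'" and nU: "n \<in> hitting_times X T U V"
    using weakly_mixing_common_hitting_time[OF assms(3) _ assms(6) _ assms(7)] by blast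
  then obtain x where x: "x \<in> W" "(T ^^ k) x \<in> W" "(T ^^ n) x \<in> A" "(T ^^ k) ((T ^^ n) x) \<in> B"
    unfolding hitting_times_def W'_def A'_def by auto
  have "(T ^^ k) ((T ^^ n) x) = (T ^^ n) ((T ^^ k) x)"
    by (metis add.commute comp_apply funpow_add)
  with x have "(T ^^ n) ((T ^^ k) x) \<in> B"
    by simp
  with x nU show ?thesis
    using that by blast
qed

lemma dist_gt_quarter:
  fixes a b x y :: "'a::metric_space"
  assumes "dist a x < dist a b / 4" "dist b y < dist a b / 4"
  shows "dist x y > dist a b / 4"
  using dist_triangle[of a b x] dist_triangle[of x b y] dist_commute[of b y] zero_le_dist[of a b] assms
  by linarith

theorem proposition4p5:
  fixes X :: "'a::metric_space set" and T :: "'a \<Rightarrow> 'a"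
  assumes "dyn_system X T"
    and "weakly_mixing X T"
  shows "transitively_sensitive X T"
proof -
  from assms(1) obtain a b where ab: "a \<in> X" "b \<in> X" "a \<noteq> b"
    and T: "continuous_on X T" "T ` X \<subseteq> X"
    unfolding dyn_system_def by blast
  define \<delta> where "\<delta> = dist a b / 4"
  have "\<delta> > 0"
    using ab by (simp add: \<delta>_def)
  then have balls: "opene X (X \<inter> ball a \<delta>)" "opene X (X \<inter> ball b \<delta>)"
    using ab unfolding opene_def by (auto intro: openin_open_Int)
  have "sensitive_times T W \<delta> \<inter> hitting_times X T U V \<noteq> {}"
    if UVW: "opene X U" "opene X V" "opene X W" for U V W
  proof -
    obtain n x y where n: "n \<in> hitting_times X T U V" and xy: "x \<in> W" "y \<in> W"
      and "(T ^^ n) x \<in> X \<inter> ball a \<delta>" "(T ^^ n) y \<in> X \<inter> ball b \<delta>"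
      using weakly_mixing_splitting_time[OF T assms(2) balls UVW] .
    then have "dist ((T ^^ n) x) ((T ^^ n) y) > \<delta>"
      unfolding \<delta>_def by (intro dist_gt_quarter) auto
    with n xy show ?thesis
      unfolding sensitive_times_def by blast
  qed
  with \<open>\<delta> > 0\<close> show ?thesis
    unfolding transitively_sensitive_def by blast
qed

end
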